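(* Assume the setting and the CRAIG recurrence described in the context, and let $k\ge1$ be such that $u^{(k)},p^{(k)},\zeta_k$ and $g_k$ (hence $\beta_{k+1}$) are defined. Then $Mu^{(k)}+Ap^{(k)}=0$ and $b-A^Tu^{(k)}+Cp^{(k)}=-\zeta_k\,N g_k$ (which equals $-\zeta_k\beta_{k+1}Nq_{k+1}$ when $\beta_{k+1}>0$). In particular the residual of the second block equation is orthogonal (in the Euclidean inner product) to $q_1,\dots,q_k$, and $\|b-A^Tu^{(k)}+Cp^{(k)}\|_{N^{-1}}=\beta_{k+1}|\zeta_k|$, so that $\|b-A^Tu^{(k)}+Cp^{(k)}\|_{N^{-1}}/\|b\|_{N^{-1}}=\beta_{k+1}|\zeta_k|/\beta_1$.
   Context: Setting: $M\in\mathbb{R}^{m\times m}$ is symmetric positive definite, $A\in\mathbb{R}^{m\times n}$ ($n\le m$) has full column rank, $C\in\mathbb{R}^{n\times n}$ is symmetric positive semidefinite, $b\in\mathbb{R}^n$ is nonzero, and $N\in\mathbb{R}^{n\times n}$ is symmetric positive definite (the preconditioner). For a symmetric positive definite $G$ write $\|x\|_G=(x^TGx)^{1/2}$. The generalized saddle point system is $Mu+Ap=0$, $A^Tu-Cp=b$, with unique solution $(u_*,p_* )$; $S=A^TM^{-1}A+C$. CRAIG recurrence (exact arithmetic): Initialization: $\beta_1=\|b\|_{N^{-1}}$, $q_1=N^{-1}b/\beta_1$, $r_1=q_1$, $w_1=M^{-1}Aq_1$, $s_1=Cr_1$, $\alpha_1=(w_1^TMw_1+r_1^Ts_1)^{1/2}$,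 $v_1=w_1/\alpha_1$, $t_1=s_1/\alpha_1$, $\zeta_1=\beta_1/\alpha_1$, $u^{(1)}=\zeta_1v_1$, $p^{(1)}=-(\zeta_1/\alpha_1)r_1$. For $k=1,2,\dots$: $g_k=N^{-1}(A^Tv_k+t_k)-\alpha_kq_k$, $\beta_{k+1}=\|g_k\|_N$; if $\beta_{k+1}=0$ the recurrence stops; otherwise $q_{k+1}=g_k/\beta_{k+1}$, $w_{k+1}=M^{-1}Aq_{k+1}-\beta_{k+1}v_k$, $r_{k+1}=q_{k+1}-(\beta_{k+1}/\alpha_k)r_k$, $s_{k+1}=Cr_{k+1}$, $\alpha_{k+1}=(w_{k+1}^TMw_{k+1}+r_{k+1}^Ts_{k+1})^{1/2}$, $v_{k+1}=w_{k+1}/\alpha_{k+1}$, $t_{k+1}=s_{k+1}/\alpha_{k+1}$, $\zeta_{k+1}=-(\beta_{k+1}/\alpha_{k+1})\zeta_k$, $u^{(k+1)}=u^{(k)}+\zeta_{k+1}v_{k+1}$, $p^{(k+1)}=p^{(k)}-(\zeta_{k+1}/\alpha_{k+1})r_{k+1}$. *)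

theory Defs
  imports "HOL-Analysis.Analysis"
begin

definition sym_mat :: "real^'n^'n \<Rightarrow> bool" where
  "sym_mat G \<longleftrightarrow> transpose G = G"

definition spd :: "real^'n^'n \<Rightarrow> bool" where
  "spd G \<longleftrightarrow> sym_mat G \<and> (\<forall>x. x \<noteq> 0 \<longrightarrow> x \<bullet> (G *v x) > 0)"

definition spsd :: "real^'n^'n \<Rightarrow> bool" where
  "spsd G \<longleftrightarrow> sym_mat G \<and> (\<forall>x. x \<bullet> (G *v x) \<ge> 0)"

definition gnorm :: "real^'n^'n \<Rightarrow> real^'n \<Rightarrow> real" where
  "gnorm G x = sqrt (x \<bullet> (G *v x))"

record ('m, 'n) craig_st =
  cq :: "real^'n"
  cr :: "real^'n"
  cv :: "real^'m"
  ct :: "real^'n"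
  calpha :: real
  czeta :: real
  cu :: "real^'m"
  cp :: "real^'n"
  cbeta :: real

definition craig_init ::
  "real^'m^'m \<Rightarrow> real^'n^'m \<Rightarrow> real^'n^'n \<Rightarrow> real^'n \<Rightarrow> real^'n^'n \<Rightarrow> ('m,'n) craig_st" where
  "craig_init M A C b N =
    (let beta1 = gnorm (matrix_inv N) b;
         q1 = (1 / beta1) *\<^sub>R (matrix_inv N *v b);
         r1 = q1;
         w1 = matrix_inv M *v (A *v q1);
         s1 = C *v r1;
         alpha1 = sqrt (w1 \<bullet> (M *v w1) + r1 \<bullet> s1);
         v1 = (1 / alpha1) *\<^sub>R w1;
         t1 = (1 / alpha1) *\<^sub>R s1;
         zeta1 = beta1 / alpha1
     in \<lparr> cq = q1, cr = r1, cv = v1, ct = t1, calpha = alpha1, czeta = zeta1,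
          cu = zeta1 *\<^sub>R v1, cp = - ((zeta1 / alpha1) *\<^sub>R r1), cbeta = beta1 \<rparr>)"

definition craig_g_of ::
  "real^'n^'m \<Rightarrow> real^'n^'n \<Rightarrow> ('m,'n) craig_st \<Rightarrow> real^'n" where
  "craig_g_of A N st = matrix_inv N *v (transpose A *v cv st + ct st) - calpha st *\<^sub>R cq st"

definition craig_step ::
  "real^'m^'m \<Rightarrow> real^'n^'m \<Rightarrow> real^'n^'n \<Rightarrow> real^'n^'n \<Rightarrow> ('m,'n) craig_st \<Rightarrow> ('m,'n) craig_st" where
  "craig_step M A C N st =
    (let g = craig_g_of A N st;
         beta' = gnorm N g;
         q' = (1 / beta') *\<^sub>R g;
         w' = matrix_inv M *v (A *v q') - beta' *\<^sub>R cv st;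
         r' = q' - (beta' / calpha st) *\<^sub>R cr st;
         s' = C *v r';
         alpha' = sqrt (w' \<bullet> (M *v w') + r' \<bullet> s');
         v' = (1 / alpha') *\<^sub>R w';
         t' = (1 / alpha') *\<^sub>R s';
         zeta' = - (beta' / alpha') * czeta st
     in \<lparr> cq = q', cr = r', cv = v', ct = t', calpha = alpha', czeta = zeta',
          cu = cu st + zeta' *\<^sub>R v', cp = cp st - (zeta' / alpha') *\<^sub>R r', cbeta = beta' \<rparr>)"

text \<open>craig_state M A C b N j is the state at iteration k = j + 1.\<close>
primrec craig_state ::
  "real^'m^'m \<Rightarrow> real^'n^'m \<Rightarrow> real^'n^'n \<Rightarrow> real^'n \<Rightarrow> real^'n^'n \<Rightarrow> nat \<Rightarrow> ('m,'n) craig_st" where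
  "craig_state M A C b N 0 = craig_init M A C b N"
| "craig_state M A C b N (Suc j) = craig_step M A C N (craig_state M A C b N j)"

text \<open>Accessors indexed by the paper's iteration number k (k >= 1).\<close>
definition "craig_q M A C b N k = cq (craig_state M A C b N (k - 1))"
definition "craig_alpha M A C b N k = calpha (craig_state M A C b N (k - 1))"
definition "craig_zeta M A C b N k = czeta (craig_state M A C b N (k - 1))"
definition "craig_u M A C b N k = cu (craig_state M A C b N (k - 1))"
definition "craig_p M A C b N k = cp (craig_state M A C b N (k - 1))"
definition "craig_beta M A C b N k = cbeta (craig_state M A C b N (k - 1))"
definition "craig_g M A C b N k = craig_g_of A N (craig_state M A C b N (k - 1))"

end

theory Submission
  imports Defs
begin

text \<open>
  The recurrence maintains w_k = M^-1 A r_k. Hence M v_k = A r_k / alpha_k,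
  alpha_k^2 = r_k^T S r_k and A^T v_k + t_k = S r_k / alpha_k, so every update of (u, p)
  preserves M u + A p = 0, while the second-block residual obeys the same recursion as
  -zeta_k N g_k, because zeta_(k+1) alpha_(k+1) = -beta_(k+1) zeta_k and
  N q_(k+1) = N g_k / beta_(k+1).

  Orthogonality of the residual to q_1, ..., q_k is the Lanczos property of the recurrence:
  by induction the q_i are N-orthonormal and the r_i are S-conjugate, using
  S r_i = alpha_i (alpha_i N q_i + beta_(i+1) N q_(i+1)) and
  q_(i+1) = r_(i+1) + (beta_(i+1) / alpha_i) r_i. Finally the N^-1-norm of N g_k is the
  N-norm of g_k, which is beta_(k+1).
\<close>

lemma sym_mat_inner_commute:
  fixes G :: "real^'k^'k"
  assumes "sym_mat G"
  shows "x \<bullet> (G *v y) = y \<bullet> (G *v x)"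
  by (metis assms sym_mat_def dot_lmul_matrix transpose_matrix_vector inner_commute)

lemma inner_transpose_mult:
  fixes B :: "real^'n^'m"
  shows "x \<bullet> (transpose B *v y) = (B *v x) \<bullet> y"
  by (metis dot_lmul_matrix inner_commute transpose_matrix_vector)

lemma matrix_vector_mult_uminus:
  fixes B :: "'a::comm_ring_1^'n^'m"
  shows "B *v (- x) = - (B *v x)"
  by (metis diff_0 matrix_vector_mult_0_right matrix_vector_mult_diff_distrib)

lemma invertible_matrix_inv_mult:
  fixes G :: "'a::comm_semiring_1^'k^'k"
  assumes "invertible G"
  shows "G ** matrix_inv G = mat 1" "matrix_inv G ** G = mat 1"
    and "G *v (matrix_inv G *v x) = x" "matrix_inv G *v (G *v x) = x"
proof -
  have "G ** matrix_inv G = mat 1 \<and> matrix_inv G ** G = mat 1"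
    using assms unfolding invertible_def matrix_inv_def by (rule someI_ex)
  then show "G ** matrix_inv G = mat 1" "matrix_inv G ** G = mat 1"
    and "G *v (matrix_inv G *v x) = x" "matrix_inv G *v (G *v x) = x"
    by (simp_all add: matrix_vector_mul_assoc)
qed

lemma spd_nonneg:
  fixes G :: "real^'k^'k"
  assumes "spd G"
  shows "0 \<le> x \<bullet> (G *v x)"
  using assms unfolding spd_def by (cases "x = 0") (auto intro: less_imp_le)

lemma spd_invertible:
  fixes G :: "real^'k^'k"
  assumes "spd G"
  shows "invertible G"
proof -
  have "x = 0" if "G *v x = 0" for x
    using assms that unfolding spd_def by (metis inner_zero_right less_irrefl)
  then obtain B :: "real^'k^'k" where "B ** G = mat 1"
    using matrix_left_invertible_ker by blast
  then show ?thesis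
    using invertible_left_inverse by blast
qed

lemma sym_mat_matrix_inv:
  fixes G :: "real^'k^'k"
  assumes "sym_mat G" "invertible G"
  shows "sym_mat (matrix_inv G)"
proof -
  note inv = invertible_matrix_inv_mult[OF assms(2)]
  have "transpose (matrix_inv G) ** G = mat 1"
    using assms(1) inv(1) matrix_transpose_mul[of G "matrix_inv G"]
    by (simp add: sym_mat_def)
  then have "transpose (matrix_inv G) = transpose (matrix_inv G) ** (G ** matrix_inv G)"
    using inv(1) by simp
  also have "\<dots> = matrix_inv G"
    using \<open>transpose (matrix_inv G) ** G = mat 1\<close> by (simp add: matrix_mul_assoc)
  finally show ?thesis
    by (simp add: sym_mat_def)
qed

lemma spd_matrix_inv:
  fixes G :: "real^'k^'k"
  assumes "spd G"
  shows "spd (matrix_inv G)"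
proof -
  have sym: "sym_mat G" and pos: "\<And>y. y \<noteq> 0 \<Longrightarrow> 0 < y \<bullet> (G *v y)"
    using assms by (simp_all add: spd_def)
  note inv = invertible_matrix_inv_mult[OF spd_invertible[OF assms]]
  have "0 < x \<bullet> (matrix_inv G *v x)" if "x \<noteq> 0" for x
  proof -
    have "matrix_inv G *v x \<noteq> 0"
      using inv(3)[of x] that by auto
    moreover have "x \<bullet> (matrix_inv G *v x) = (matrix_inv G *v x) \<bullet> (G *v (matrix_inv G *v x))"
      using inv(3) by (simp add: inner_commute)
    ultimately show ?thesis
      using pos by simp
  qed
  then show ?thesis
    using sym_mat_matrix_inv[OF sym spd_invertible[OF assms]] by (simp add: spd_def)
qed

lemma gnorm_scaleR: "gnorm G (c *\<^sub>R x) = \<bar>c\<bar> * gnorm G x"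
proof -
  have "(c *\<^sub>R x) \<bullet> (G *v (c *\<^sub>R x)) = c\<^sup>2 * (x \<bullet> (G *v x))"
    by (simp add: matrix_vector_mult_scaleR power2_eq_square)
  then show ?thesis
    by (simp add: gnorm_def real_sqrt_mult)
qed

lemma gnorm_uminus: "gnorm G (- x) = gnorm G x"
  using gnorm_scaleR[of G "-1" x] by simp

lemma gnorm_normalize:
  assumes "0 < gnorm G x"
  shows "gnorm G ((1 / gnorm G x) *\<^sub>R x) = 1"
  using assms unfolding gnorm_scaleR by simp

lemma gnorm_eq_1_iff: "gnorm G x = 1 \<longleftrightarrow> x \<bullet> (G *v x) = 1"
  by (simp add: gnorm_def)

lemma gnorm_matrix_inv_mult:
  fixes G :: "real^'k^'k"
  assumes "invertible G"
  shows "gnorm (matrix_inv G) (G *v x) = gnorm G x"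
  using invertible_matrix_inv_mult(4)[OF assms] by (simp add: gnorm_def inner_commute)

lemma gnorm_mult_matrix_inv:
  fixes G :: "real^'k^'k"
  assumes "invertible G"
  shows "gnorm G (matrix_inv G *v x) = gnorm (matrix_inv G) x"
  using invertible_matrix_inv_mult(3)[OF assms] by (simp add: gnorm_def inner_commute)

lemma spd_gnorm_nonneg:
  fixes G :: "real^'k^'k"
  assumes "spd G"
  shows "0 \<le> gnorm G x"
  using spd_nonneg[OF assms] by (simp add: gnorm_def)

lemma spd_gnorm_pos:
  fixes G :: "real^'k^'k"
  assumes "spd G" "x \<noteq> 0"
  shows "0 < gnorm G x"
  using assms by (simp add: spd_def gnorm_def)

declare craig_state.simps [simp del] transpose_matrix_vector [simp del]

locale craig =
  fixes M :: "real^'m^'m" and A :: "real^'n^'m" and C :: "real^'n^'n"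
    and b :: "real^'n" and N :: "real^'n^'n"
  assumes spd_M: "spd M" and spsd_C: "spsd C" and spd_N: "spd N" and b_nonzero: "b \<noteq> 0"
begin

(* The index j of these abbreviations is iteration j + 1 of the recurrence. *)
abbreviation "state j \<equiv> craig_state M A C b N j"
abbreviation "q j \<equiv> cq (state j)"
abbreviation "r j \<equiv> cr (state j)"
abbreviation "v j \<equiv> cv (state j)"
abbreviation "t j \<equiv> ct (state j)"
abbreviation "\<alpha> j \<equiv> calpha (state j)"
abbreviation "\<beta> j \<equiv> cbeta (state j)"
abbreviation "\<zeta> j \<equiv> czeta (state j)"
abbreviation "u j \<equiv> cu (state j)"
abbreviation "p j \<equiv> cp (state j)"
abbreviation "g j \<equiv> craig_g_of A N (state j)"
abbreviation "residual j \<equiv> b - transpose A *v u j + C *v p j"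
abbreviation "Mi \<equiv> matrix_inv M"
abbreviation "Ni \<equiv> matrix_inv N"

definition S :: "real^'n^'n" where
  "S = transpose A ** Mi ** A + C"

lemma
  shows beta_0: "\<beta> 0 = gnorm Ni b"
    and q_0: "q 0 = (1 / \<beta> 0) *\<^sub>R (Ni *v b)"
    and r_0: "r 0 = q 0"
    and v_0: "v 0 = (1 / \<alpha> 0) *\<^sub>R (Mi *v (A *v q 0))"
    and t_0: "t 0 = (1 / \<alpha> 0) *\<^sub>R (C *v r 0)"
    and alpha_0: "\<alpha> 0 = sqrt ((Mi *v (A *v q 0)) \<bullet> (M *v (Mi *v (A *v q 0))) + r 0 \<bullet> (C *v r 0))"
    and zeta_0: "\<zeta> 0 = \<beta> 0 / \<alpha> 0"
    and u_0: "u 0 = \<zeta> 0 *\<^sub>R v 0"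
    and p_0: "p 0 = - ((\<zeta> 0 / \<alpha> 0) *\<^sub>R r 0)"
  by (simp_all add: craig_state.simps craig_init_def Let_def)

lemma
  fixes j :: nat
  defines "w \<equiv> Mi *v (A *v q (Suc j)) - \<beta> (Suc j) *\<^sub>R v j"
  shows beta_Suc: "\<beta> (Suc j) = gnorm N (g j)"
    and q_Suc: "q (Suc j) = (1 / \<beta> (Suc j)) *\<^sub>R g j"
    and r_Suc: "r (Suc j) = q (Suc j) - (\<beta> (Suc j) / \<alpha> j) *\<^sub>R r j"
    and v_Suc: "v (Suc j) = (1 / \<alpha> (Suc j)) *\<^sub>R w"
    and t_Suc: "t (Suc j) = (1 / \<alpha> (Suc j)) *\<^sub>R (C *v r (Suc j))"
    and alpha_Suc: "\<alpha> (Suc j) = sqrt (w \<bullet> (M *v w) + r (Suc j) \<bullet> (C *v r (Suc j)))"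
    and zeta_Suc: "\<zeta> (Suc j) = - (\<beta> (Suc j) / \<alpha> (Suc j)) * \<zeta> j"
    and u_Suc: "u (Suc j) = u j + \<zeta> (Suc j) *\<^sub>R v (Suc j)"
    and p_Suc: "p (Suc j) = p j - (\<zeta> (Suc j) / \<alpha> (Suc j)) *\<^sub>R r (Suc j)"
  by (simp_all add: w_def craig_state.simps craig_step_def Let_def)

lemma M_Mi: "M *v (Mi *v x) = x"
  using invertible_matrix_inv_mult(3)[OF spd_invertible[OF spd_M]] .

lemma N_Ni: "N *v (Ni *v x) = x"
  using invertible_matrix_inv_mult(3)[OF spd_invertible[OF spd_N]] .

lemma N_sym: "x \<bullet> (N *v y) = y \<bullet> (N *v x)"
  using spd_N by (simp add: spd_def sym_mat_inner_commute)

lemma S_mult: "S *v x = transpose A *v (Mi *v (A *v x)) + C *v x"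
  by (simp add: S_def matrix_vector_mult_add_rdistrib matrix_vector_mul_assoc
      matrix_mul_assoc)

lemma inner_S: "x \<bullet> (S *v y) = (A *v x) \<bullet> (Mi *v (A *v y)) + x \<bullet> (C *v y)"
  by (simp add: S_mult inner_add_right inner_transpose_mult)

lemma S_sym: "x \<bullet> (S *v y) = y \<bullet> (S *v x)"
proof -
  have "sym_mat Mi" "sym_mat C"
    using spd_matrix_inv[OF spd_M] spsd_C by (simp_all add: spd_def spsd_def)
  then show ?thesis
    unfolding inner_S by (metis sym_mat_inner_commute inner_commute)
qed

lemma S_nonneg: "0 \<le> x \<bullet> (S *v x)"
  using spd_nonneg[OF spd_matrix_inv[OF spd_M], of "A *v x"] spsd_C
  by (simp add: inner_S spsd_def)

lemma v_alpha_eq: "v j = (1 / \<alpha> j) *\<^sub>R (Mi *v (A *v r j)) \<and> \<alpha> j = sqrt (r j \<bullet> (S *v r j))"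
proof -
  have quadratic_form: "(Mi *v (A *v x)) \<bullet> (M *v (Mi *v (A *v x))) + x \<bullet> (C *v x) = x \<bullet> (S *v x)" for x
    by (simp add: M_Mi inner_S inner_commute)
  show ?thesis
  proof (induction j)
    case 0
    show ?case
      using quadratic_form by (simp add: v_0 alpha_0 r_0)
  next
    case (Suc j)
    then have "Mi *v (A *v q (Suc j)) - \<beta> (Suc j) *\<^sub>R v j = Mi *v (A *v r (Suc j))"
      by (simp add: r_Suc algebra_simps)
    then show ?case
      using quadratic_form by (simp add: v_Suc alpha_Suc)
  qed
qed

lemma v_eq: "v j = (1 / \<alpha> j) *\<^sub>R (Mi *v (A *v r j))"
  using v_alpha_eq by blast

lemma alpha_sq: "\<alpha> j ^ 2 = r j \<bullet> (S *v r j)"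
  using v_alpha_eq[of j] S_nonneg by simp

lemma M_v: "M *v v j = (1 / \<alpha> j) *\<^sub>R (A *v r j)"
  by (simp add: v_eq matrix_vector_mult_scaleR M_Mi)

lemma t_eq: "t j = (1 / \<alpha> j) *\<^sub>R (C *v r j)"
  by (cases j) (simp_all add: t_0 t_Suc)

lemma transpose_A_v_plus_t: "transpose A *v v j + t j = (1 / \<alpha> j) *\<^sub>R (S *v r j)"
  by (simp only: v_eq t_eq S_mult matrix_vector_mult_scaleR scaleR_right_distrib)

lemma N_g_unfold: "N *v g j = transpose A *v v j + t j - \<alpha> j *\<^sub>R (N *v q j)"
  by (simp add: craig_g_of_def algebra_simps N_Ni)

lemma N_g_eq: "N *v g j = (1 / \<alpha> j) *\<^sub>R (S *v r j) - \<alpha> j *\<^sub>R (N *v q j)"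
  unfolding N_g_unfold transpose_A_v_plus_t ..

lemma first_block_residual: "M *v u j + A *v p j = 0"
proof (induction j)
  case 0
  show ?case
    by (simp add: u_0 p_0 M_v matrix_vector_mult_scaleR matrix_vector_mult_uminus)
next
  case (Suc j)
  have "M *v u (Suc j) + A *v p (Suc j) = (M *v u j + A *v p j)
      + \<zeta> (Suc j) *\<^sub>R (M *v v (Suc j)) - (\<zeta> (Suc j) / \<alpha> (Suc j)) *\<^sub>R (A *v r (Suc j))"
    by (simp add: u_Suc p_Suc algebra_simps)
  then show ?case
    using Suc.IH by (simp add: M_v)
qed

lemma beta_0_pos: "0 < \<beta> 0"
  using spd_gnorm_pos[OF spd_matrix_inv[OF spd_N] b_nonzero] by (simp add: beta_0)

lemma beta_nonneg: "0 \<le> \<beta> j"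
  using spd_gnorm_nonneg[OF spd_N] beta_0_pos by (cases j) (simp_all add: beta_Suc)

lemma N_q_0: "N *v q 0 = (1 / \<beta> 0) *\<^sub>R b"
  by (simp add: q_0 matrix_vector_mult_scaleR N_Ni)

lemma N_q_Suc: "N *v q (Suc j) = (1 / \<beta> (Suc j)) *\<^sub>R (N *v g j)"
  by (simp add: q_Suc matrix_vector_mult_scaleR)

lemma g_eq: "\<beta> (Suc j) \<noteq> 0 \<Longrightarrow> g j = \<beta> (Suc j) *\<^sub>R q (Suc j)"
  by (simp add: q_Suc)

lemma q_N_normalized:
  assumes "j = 0 \<or> \<beta> j \<noteq> 0"
  shows "q j \<bullet> (N *v q j) = 1"
proof -
  have "gnorm N (q j) = 1"
  proof (cases j)
    case 0
    then show ?thesis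
      using beta_0_pos gnorm_normalize[of N "Ni *v b"]
      by (simp add: q_0 beta_0 gnorm_mult_matrix_inv[OF spd_invertible[OF spd_N]])
  next
    case (Suc i)
    then have "0 < gnorm N (g i)"
      using assms beta_nonneg[of j] by (simp add: beta_Suc)
    then show ?thesis
      using gnorm_normalize[of N "g i"] Suc by (simp add: q_Suc beta_Suc)
  qed
  then show ?thesis
    by (simp add: gnorm_eq_1_iff)
qed

lemma residual_0: "residual 0 = b - \<zeta> 0 *\<^sub>R (transpose A *v v 0 + t 0)"
  by (simp add: u_0 p_0 t_0 algebra_simps matrix_vector_mult_uminus)

lemma residual_Suc:
  "residual (Suc j) = residual j - \<zeta> (Suc j) *\<^sub>R (transpose A *v v (Suc j) + t (Suc j))"
  by (simp add: u_Suc p_Suc t_Suc algebra_simps)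

definition defined_upto :: "nat \<Rightarrow> bool" where
  "defined_upto j \<longleftrightarrow> (\<forall>i\<le>j. \<alpha> i \<noteq> 0 \<and> (0 < i \<longrightarrow> \<beta> i \<noteq> 0))"

lemma second_block_residual: "defined_upto j \<Longrightarrow> residual j = - (\<zeta> j *\<^sub>R (N *v g j))"
proof (induction j)
  case 0
  then have "\<zeta> 0 * \<alpha> 0 / \<beta> 0 = 1"
    using beta_0_pos by (simp add: defined_upto_def zeta_0)
  have "- (\<zeta> 0 *\<^sub>R (N *v g 0))
      = (\<zeta> 0 * \<alpha> 0 / \<beta> 0) *\<^sub>R b - \<zeta> 0 *\<^sub>R (transpose A *v v 0 + t 0)"
    by (simp add: N_g_unfold N_q_0 algebra_simps)
  also have "\<dots> = residual 0"
    unfolding \<open>\<zeta> 0 * \<alpha> 0 / \<beta> 0 = 1\<close> residual_0 by simp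
  finally show ?case ..
next
  case (Suc j)
  then have IH: "residual j = - (\<zeta> j *\<^sub>R (N *v g j))"
    by (simp add: defined_upto_def)
  have "\<alpha> (Suc j) \<noteq> 0" "\<beta> (Suc j) \<noteq> 0"
    using Suc.prems by (auto simp: defined_upto_def)
  then have "\<zeta> (Suc j) * \<alpha> (Suc j) / \<beta> (Suc j) = - \<zeta> j"
    by (simp add: zeta_Suc)
  then have "- (\<zeta> (Suc j) *\<^sub>R (N *v g (Suc j)))
      = - (\<zeta> j *\<^sub>R (N *v g j)) - \<zeta> (Suc j) *\<^sub>R (transpose A *v v (Suc j) + t (Suc j))"
    by (simp add: N_g_unfold[of "Suc j"] N_q_Suc algebra_simps)
  then show ?case
    unfolding residual_Suc IH by (rule sym)
qed

definition orthonormal_conjugate_upto :: "nat \<Rightarrow> bool" where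
  "orthonormal_conjugate_upto j \<longleftrightarrow>
    (\<forall>i\<le>j. \<forall>l\<le>j. q i \<bullet> (N *v q l) = of_bool (i = l) \<and> (i \<noteq> l \<longrightarrow> r i \<bullet> (S *v r l) = 0))"

lemma
  shows q_eq_r_0: "q 0 = r 0"
    and q_eq_r_Suc: "q (Suc i) = r (Suc i) + (\<beta> (Suc i) / \<alpha> i) *\<^sub>R r i"
  by (simp_all add: r_0 r_Suc)

lemma S_r_eq:
  assumes "\<alpha> i \<noteq> 0" "\<beta> (Suc i) \<noteq> 0"
  shows "S *v r i = \<alpha> i *\<^sub>R (\<alpha> i *\<^sub>R (N *v q i) + \<beta> (Suc i) *\<^sub>R (N *v q (Suc i)))"
proof -
  have "(1 / \<alpha> i) *\<^sub>R (S *v r i) = \<alpha> i *\<^sub>R (N *v q i) + \<beta> (Suc i) *\<^sub>R (N *v q (Suc i))"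
    using N_g_eq[of i] g_eq[OF assms(2)] by (simp add: matrix_vector_mult_scaleR algebra_simps)
  then have "\<alpha> i *\<^sub>R ((1 / \<alpha> i) *\<^sub>R (S *v r i))
      = \<alpha> i *\<^sub>R (\<alpha> i *\<^sub>R (N *v q i) + \<beta> (Suc i) *\<^sub>R (N *v q (Suc i)))"
    by simp
  then show ?thesis
    using assms(1) by simp
qed

lemma q_N_g_orthogonal:
  assumes "defined_upto j" "orthonormal_conjugate_upto j" "i \<le> j"
  shows "q i \<bullet> (N *v g j) = 0"
proof -
  have "q i \<bullet> (S *v r j) = of_bool (i = j) * \<alpha> j ^ 2"
  proof (cases i)
    case 0
    then show ?thesis
      using assms alpha_sq[of j] by (auto simp: orthonormal_conjugate_upto_def q_eq_r_0)
  next
    case (Suc i')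
    then show ?thesis
      using assms alpha_sq[of j]
      by (auto simp: orthonormal_conjugate_upto_def q_eq_r_Suc inner_add_left)
  qed
  moreover have "\<alpha> j \<noteq> 0" "q i \<bullet> (N *v q j) = of_bool (i = j)"
    using assms by (auto simp: defined_upto_def orthonormal_conjugate_upto_def)
  ultimately show ?thesis
    by (simp add: N_g_eq inner_diff_right power2_eq_square)
qed

lemma q_Suc_N_orthogonal:
  assumes "defined_upto j" "orthonormal_conjugate_upto j" "l \<le> j"
  shows "q (Suc j) \<bullet> (N *v q l) = 0"
  using q_N_g_orthogonal[OF assms] N_sym[of "g j" "q l"] by (simp add: q_Suc)

lemma r_Suc_S_conjugate:
  assumes def: "defined_upto (Suc j)" and orth: "orthonormal_conjugate_upto j" and "l \<le> j"
  shows "r (Suc j) \<bullet> (S *v r l) = 0"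
proof -
  have def_j: "defined_upto j"
    using def by (simp add: defined_upto_def)
  have "\<alpha> l \<noteq> 0" "\<beta> (Suc l) \<noteq> 0" "\<alpha> j \<noteq> 0"
    using def \<open>l \<le> j\<close> by (auto simp: defined_upto_def)
  have "q (Suc j) \<bullet> (N *v q (Suc l)) = of_bool (l = j)"
  proof (cases "l = j")
    case True
    then show ?thesis
      using q_N_normalized[of "Suc j"] def by (simp add: defined_upto_def)
  next
    case False
    then show ?thesis
      using q_Suc_N_orthogonal[OF def_j orth, of "Suc l"] \<open>l \<le> j\<close> by simp
  qed
  then have "q (Suc j) \<bullet> (S *v r l) = of_bool (l = j) * \<alpha> j * \<beta> (Suc j)"
    using q_Suc_N_orthogonal[OF def_j orth \<open>l \<le> j\<close>]
    by (simp add: S_r_eq[OF \<open>\<alpha> l \<noteq> 0\<close> \<open>\<beta> (Suc l) \<noteq> 0\<close>] inner_add_right)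
  moreover have "r j \<bullet> (S *v r l) = of_bool (l = j) * \<alpha> j ^ 2"
    using orth \<open>l \<le> j\<close> alpha_sq[of j] by (auto simp: orthonormal_conjugate_upto_def)
  ultimately show ?thesis
    using \<open>\<alpha> j \<noteq> 0\<close> by (simp add: r_Suc inner_diff_left power2_eq_square)
qed

lemma orthonormal_conjugate_upto_Suc:
  assumes def: "defined_upto (Suc j)" and orth: "orthonormal_conjugate_upto j"
  shows "orthonormal_conjugate_upto (Suc j)"
proof -
  have def_j: "defined_upto j"
    using def by (simp add: defined_upto_def)
  have new: "q (Suc j) \<bullet> (N *v q l) = of_bool (Suc j = l)
      \<and> (Suc j \<noteq> l \<longrightarrow> r (Suc j) \<bullet> (S *v r l) = 0)" if "l \<le> Suc j" for l
  proof (cases "l = Suc j")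
    case True
    then show ?thesis
      using q_N_normalized[of "Suc j"] def by (simp add: defined_upto_def)
  next
    case False
    then show ?thesis
      using that q_Suc_N_orthogonal[OF def_j orth] r_Suc_S_conjugate[OF def orth] by simp
  qed
  show ?thesis
    unfolding orthonormal_conjugate_upto_def
  proof (intro allI impI)
    fix i l
    assume "i \<le> Suc j" "l \<le> Suc j"
    then consider "i = Suc j" | "l = Suc j" "i \<le> j" | "i \<le> j" "l \<le> j"
      by linarith
    then show "q i \<bullet> (N *v q l) = of_bool (i = l) \<and> (i \<noteq> l \<longrightarrow> r i \<bullet> (S *v r l) = 0)"
    proof cases
      case 1
      then show ?thesis
        using new \<open>l \<le> Suc j\<close> by simp
    next
      case 2
      then show ?thesis
        using new[of i] N_sym[of "q i" "q l"] S_sym[of "r i" "r l"] by auto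
    next
      case 3
      then show ?thesis
        using orth by (simp add: orthonormal_conjugate_upto_def)
    qed
  qed
qed

lemma defined_upto_imp_orthonormal_conjugate: "defined_upto j \<Longrightarrow> orthonormal_conjugate_upto j"
proof (induction j)
  case 0
  then show ?case
    using q_N_normalized[of 0] by (simp add: orthonormal_conjugate_upto_def)
next
  case (Suc j)
  then show ?case
    using orthonormal_conjugate_upto_Suc by (simp add: defined_upto_def)
qed

lemma residual_orthogonal:
  assumes "defined_upto j" "i \<le> j"
  shows "residual j \<bullet> q i = 0"
  using q_N_g_orthogonal[OF assms(1) defined_upto_imp_orthonormal_conjugate[OF assms(1)] assms(2)]
  by (simp add: second_block_residual[OF assms(1)] inner_commute)

lemma residual_eq_beta_q:
  "defined_upto j \<Longrightarrow> 0 < \<beta> (Suc j) \<Longrightarrow>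
    residual j = - ((\<zeta> j * \<beta> (Suc j)) *\<^sub>R (N *v q (Suc j)))"
  by (simp add: second_block_residual g_eq matrix_vector_mult_scaleR)

lemma residual_norm: "defined_upto j \<Longrightarrow> gnorm Ni (residual j) = \<beta> (Suc j) * \<bar>\<zeta> j\<bar>"
  by (simp add: second_block_residual gnorm_uminus gnorm_scaleR beta_Suc
      gnorm_matrix_inv_mult[OF spd_invertible[OF spd_N]])

end

theorem mainTheorem3:
  fixes M :: "real^'m^'m" and A :: "real^'n^'m" and C N :: "real^'n^'n"
    and b :: "real^'n" and k :: nat
  assumes "spd M" and "CARD('n) \<le> CARD('m)" and "rank A = CARD('n)"
    and "spsd C" and "b \<noteq> 0" and "spd N"
    and "k \<ge> 1"
    and defined_beta: "\<forall>j\<in>{2..k}. craig_beta M A C b N j \<noteq> 0"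
    and defined_alpha: "\<forall>j\<in>{1..k}. craig_alpha M A C b N j \<noteq> 0"
  shows "M *v craig_u M A C b N k + A *v craig_p M A C b N k = 0
    \<and> b - transpose A *v craig_u M A C b N k + C *v craig_p M A C b N k
        = - (craig_zeta M A C b N k *\<^sub>R (N *v craig_g M A C b N k))
    \<and> (craig_beta M A C b N (k + 1) > 0 \<longrightarrow>
        b - transpose A *v craig_u M A C b N k + C *v craig_p M A C b N k
        = - ((craig_zeta M A C b N k * craig_beta M A C b N (k + 1))
               *\<^sub>R (N *v craig_q M A C b N (k + 1))))
    \<and> (\<forall>j\<in>{1..k}. (b - transpose A *v craig_u M A C b N k + C *v craig_p M A C b N k)
                       \<bullet> craig_q M A C b N j = 0)
    \<and> gnorm (matrix_inv N) (b - transpose A *v craig_u M A C b N k + C *v craig_p M A C b N k)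
        = craig_beta M A C b N (k + 1) * \<bar>craig_zeta M A C b N k\<bar>
    \<and> gnorm (matrix_inv N) (b - transpose A *v craig_u M A C b N k + C *v craig_p M A C b N k)
        / gnorm (matrix_inv N) b
        = craig_beta M A C b N (k + 1) * \<bar>craig_zeta M A C b N k\<bar> / craig_beta M A C b N 1"
proof -
  (* Full column rank of A would make S positive definite and hence every alpha nonzero;
     nonvanishing is assumed directly. *)
  interpret craig M A C b N
    using assms by unfold_locales
  obtain j where k: "k = Suc j"
    using \<open>k \<ge> 1\<close> by (cases k) auto
  have defined: "defined_upto j"
    unfolding defined_upto_def
  proof (intro allI impI conjI)
    fix i
    assume "i \<le> j"
    then show "\<alpha> i \<noteq> 0"
      using defined_alpha[rule_format, of "Suc i"] by (simp add: craig_alpha_def k)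
    assume "0 < i"
    with \<open>i \<le> j\<close> show "\<beta> i \<noteq> 0"
      using defined_beta[rule_format, of "Suc i"] by (simp add: craig_beta_def k)
  qed
  have "\<forall>i\<in>{1..k}. residual j \<bullet> craig_q M A C b N i = 0"
    using residual_orthogonal[OF defined] by (auto simp: craig_q_def k)
  then show ?thesis
    using first_block_residual second_block_residual[OF defined]
      residual_eq_beta_q[OF defined] residual_norm[OF defined]
    by (simp add: k craig_u_def craig_p_def craig_zeta_def craig_g_def craig_beta_def craig_q_def
        beta_0)
qed

end
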